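(* Let $G$ be a flat affine group scheme over $R$ and $N\to G$ the automatic blowup of the identity. Then for every $n\ge0$ the group scheme $N\otimes_RR_n$ over $R_n$ is trivial, i.e. isomorphic to $\mathrm{Spec}\,R_n$. Conversely, if $\rho:\mathcal G\to G$ is a morphism of flat affine group schemes over $R$ inducing an isomorphism on generic fibres and such that $\mathcal G\otimes_RR_n$ is trivial for all $n\ge0$, then $R[\mathcal G]=R[N]$ as subrings of $K[G]$, i.e. $\rho$ is the automatic blowup of the identity.
   Context: $R$ is a discrete valuation ring with uniformizer $\pi$, fraction field $K$, residue field $k$; $R_n=R/(\pi^{n+1})$; $R[G]\subset K[G]$ for flat $G$. The Neron blowup of a flat affine group scheme $H$ at a closed subgroup of $H\otimes k$ with ideal $J\subset R[H]$ (inverse image of its ideal) is $\mathrm{Spec}$ of the subring of $K[H]$ generated by $R[H]$ and $\pi^{-1}J$. The automatic blowup of the identity $N\to G$ is the limit of $\cdots\to G_{n+1}\to G_n\to\cdots\to G_0=G$, where $G_{n+1}\to G_n$ is the Neron blowup of $G_n$ at $\{e\}\subset G_n\otimes k$. *)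

theory Defs
  imports Complex_Main
begin

text \<open>
The field 'k plays the role of the fraction field K; R is a subset of 'k
which is a discrete valuation ring with uniformizer unif and fraction field K.
The coordinate ring K[G] is a commutative ring 'a, made into a K-algebra by the
ring homomorphism iota; the counit of K[G] is eps. Coordinate rings R[H] of flat
affine group schemes H with generic fibre G_K are R-subalgebras of K[G] spanning
K[G] over K (flatness over a DVR = torsion-freeness, automatic inside K[G]).
\<close>

definition is_ring_hom :: "('b::comm_ring_1 \<Rightarrow> 'c::comm_ring_1) \<Rightarrow> bool" where
  "is_ring_hom f \<longleftrightarrow> f 1 = 1 \<and> (\<forall>x y. f (x + y) = f x + f y \<and> f (x * y) = f x * f y)"

definition is_subring :: "'b::comm_ring_1 set \<Rightarrow> bool" where
  "is_subring S \<longleftrightarrow> 1 \<in> S \<and> (\<forall>x\<in>S. \<forall>y\<in>S. x + y \<in> S \<and> x * y \<in> S \<and> - x \<in> S)"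

definition is_dvr_unif :: "'k::field set \<Rightarrow> 'k \<Rightarrow> bool" where
  "is_dvr_unif R unif \<longleftrightarrow> is_subring R \<and> unif \<in> R \<and> unif \<noteq> 0 \<and> inverse unif \<notin> R \<and>
     (\<forall>x. x \<noteq> 0 \<longrightarrow> (\<exists>v m. v \<in> R \<and> inverse v \<in> R \<and> x = v * unif powi m))"

definition ring_gen :: "'b::comm_ring_1 set \<Rightarrow> 'b set" where
  "ring_gen S = \<Inter> {B. is_subring B \<and> S \<subseteq> B}"

text \<open>A is (the image of) the coordinate ring R[H] of a flat affine group scheme H
  over R with H_K = G_K, inside K[G]: an R-subalgebra with K.A = K[G], on which the
  counit takes values in R.\<close>
definition is_R_form :: "'k::field set \<Rightarrow> 'k \<Rightarrow> ('k \<Rightarrow> 'a::comm_ring_1) \<Rightarrow> ('a \<Rightarrow> 'k) \<Rightarrow> 'a set \<Rightarrow> bool" where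
  "is_R_form R unif iota eps A \<longleftrightarrow> is_subring A \<and> iota ` R \<subseteq> A \<and> eps ` A \<subseteq> R \<and>
     (\<forall>y. \<exists>a\<in>A. \<exists>n::nat. y = iota (inverse unif ^ n) * a)"

text \<open>Neron blowup of H (coordinate ring A) at the identity of H \<otimes> k:
  J = inverse image in R[H] of the ideal of {e} in k[H], i.e. {x \<in> A. eps x \<in> unif R};
  the blowup is the subring of K[G] generated by A and unif^-1 J.\<close>
definition neron_blowup_e :: "'k::field set \<Rightarrow> 'k \<Rightarrow> ('k \<Rightarrow> 'a::comm_ring_1) \<Rightarrow> ('a \<Rightarrow> 'k) \<Rightarrow> 'a set \<Rightarrow> 'a set" where
  "neron_blowup_e R unif iota eps A =
     ring_gen (A \<union> (\<lambda>x. iota (inverse unif) * x) ` {x \<in> A. eps x \<in> (\<lambda>r. unif * r) ` R})"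

primrec aut_tower :: "'k::field set \<Rightarrow> 'k \<Rightarrow> ('k \<Rightarrow> 'a::comm_ring_1) \<Rightarrow> ('a \<Rightarrow> 'k) \<Rightarrow> 'a set \<Rightarrow> nat \<Rightarrow> 'a set" where
  "aut_tower R unif iota eps A 0 = A"
| "aut_tower R unif iota eps A (Suc n) = neron_blowup_e R unif iota eps (aut_tower R unif iota eps A n)"

text \<open>Automatic blowup of the identity: R[N] = colimit (union) of the R[G_n].\<close>
definition aut_blowup :: "'k::field set \<Rightarrow> 'k \<Rightarrow> ('k \<Rightarrow> 'a::comm_ring_1) \<Rightarrow> ('a \<Rightarrow> 'k) \<Rightarrow> 'a set \<Rightarrow> 'a set" where
  "aut_blowup R unif iota eps A = (\<Union>n. aut_tower R unif iota eps A n)"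

text \<open>H \<otimes>_R R_m is trivial (isomorphic to Spec R_m), where R_m = R/(unif^(m+1)):
  the structure map R_m \<rightarrow> R[H]/unif^(m+1) R[H] is bijective.\<close>
definition trivial_mod :: "'k::field set \<Rightarrow> 'k \<Rightarrow> ('k \<Rightarrow> 'a::comm_ring_1) \<Rightarrow> 'a set \<Rightarrow> nat \<Rightarrow> bool" where
  "trivial_mod R unif iota B m \<longleftrightarrow>
     (\<forall>x\<in>B. \<exists>r\<in>R. \<exists>b\<in>B. x - iota r = iota (unif ^ (m + 1)) * b) \<and>
     (\<forall>r\<in>R. (\<exists>b\<in>B. iota r = iota (unif ^ (m + 1)) * b) \<longrightarrow> (\<exists>s\<in>R. r = unif ^ (m + 1) * s))"

end

theory Submission
  imports Defs
begin

text \<open>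
Write J for the elements of a coordinate ring whose counit lies in \<pi>R. If y has integral
counit and \<pi>^k y \<in> R[G_n], then y \<in> R[G_(n+k)]: dividing by \<pi> one step at a time, each
intermediate element lies in J of the current stage. Applied to \<pi>^-(m+1) (x - \<epsilon>(x)), whose
counit is 0, this shows that every element of R[N] is a constant modulo \<pi>^(m+1), i.e.
N \<otimes> R_m is trivial. Applied to an element y of an R-form B, for which \<pi>^n y \<in> R[G] for some
n, it gives B \<subseteq> R[N]. Conversely, triviality of B modulo \<pi> says exactly that B is
closed under x \<mapsto> \<pi>^-1 x on J, so it contains every stage of the tower.
\<close>

lemma is_ring_hom_add: "is_ring_hom f \<Longrightarrow> f (x + y) = f x + f y"
  and is_ring_hom_mult: "is_ring_hom f \<Longrightarrow> f (x * y) = f x * f y"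
  and is_ring_hom_one: "is_ring_hom f \<Longrightarrow> f 1 = 1"
  by (simp_all add: is_ring_hom_def)

lemma is_ring_hom_zero: "is_ring_hom f \<Longrightarrow> f 0 = 0"
  using is_ring_hom_add[of f 0 0] by simp

lemma is_ring_hom_uminus: "is_ring_hom f \<Longrightarrow> f (- x) = - f x"
  using is_ring_hom_add[of f x "- x"] is_ring_hom_zero[of f] by (simp add: add_eq_0_iff2)

lemma is_ring_hom_diff: "is_ring_hom f \<Longrightarrow> f (x - y) = f x - f y"
  using is_ring_hom_add[of f x "- y"] is_ring_hom_uminus[of f y] by simp

lemma is_subring_one: "is_subring S \<Longrightarrow> 1 \<in> S"
  and is_subring_add: "is_subring S \<Longrightarrow> x \<in> S \<Longrightarrow> y \<in> S \<Longrightarrow> x + y \<in> S"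
  and is_subring_mult: "is_subring S \<Longrightarrow> x \<in> S \<Longrightarrow> y \<in> S \<Longrightarrow> x * y \<in> S"
  and is_subring_uminus: "is_subring S \<Longrightarrow> x \<in> S \<Longrightarrow> - x \<in> S"
  by (simp_all add: is_subring_def)

lemma is_subring_zero: "is_subring S \<Longrightarrow> 0 \<in> S"
  using is_subring_add[of S 1 "- 1"] is_subring_one[of S] is_subring_uminus[of S 1] by simp

lemma is_subring_diff: "is_subring S \<Longrightarrow> x \<in> S \<Longrightarrow> y \<in> S \<Longrightarrow> x - y \<in> S"
  using is_subring_add[of S x "- y"] is_subring_uminus[of S y] by simp

lemma is_subring_power: "is_subring S \<Longrightarrow> x \<in> S \<Longrightarrow> x ^ n \<in> S"
  by (induction n) (simp_all add: is_subring_one is_subring_mult)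

lemma is_subring_ring_gen: "is_subring (ring_gen S)"
  unfolding ring_gen_def is_subring_def by auto

lemma ring_gen_superset: "S \<subseteq> ring_gen S"
  unfolding ring_gen_def by auto

lemma ring_gen_least: "is_subring B \<Longrightarrow> S \<subseteq> B \<Longrightarrow> ring_gen S \<subseteq> B"
  unfolding ring_gen_def by auto

lemma subset_neron_blowup_e: "A \<subseteq> neron_blowup_e R unif iota eps A"
  unfolding neron_blowup_e_def by (rule subset_trans[OF Un_upper1 ring_gen_superset])

lemma neron_blowup_e_divide:
  "x \<in> A \<Longrightarrow> r \<in> R \<Longrightarrow> eps x = unif * r \<Longrightarrow> iota (inverse unif) * x \<in> neron_blowup_e R unif iota eps A"
  unfolding neron_blowup_e_def by (rule subsetD[OF ring_gen_superset]) blast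

lemma neron_blowup_e_least:
  assumes "is_subring B" and "A \<subseteq> B"
    and "\<And>x r. x \<in> A \<Longrightarrow> r \<in> R \<Longrightarrow> eps x = unif * r \<Longrightarrow> iota (inverse unif) * x \<in> B"
  shows "neron_blowup_e R unif iota eps A \<subseteq> B"
  unfolding neron_blowup_e_def using assms by (intro ring_gen_least) auto

lemma is_subring_aut_tower: "is_subring A \<Longrightarrow> is_subring (aut_tower R unif iota eps A n)"
  by (cases n) (simp_all add: neron_blowup_e_def is_subring_ring_gen)

lemma aut_tower_mono: "n \<le> m \<Longrightarrow> aut_tower R unif iota eps A n \<subseteq> aut_tower R unif iota eps A m"
proof (induction m rule: dec_induct)
  case (step k)
  then show ?case using order_trans[OF step(3) subset_neron_blowup_e] by simp
qed simp

lemma subset_aut_tower: "A \<subseteq> aut_tower R unif iota eps A n"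
  using aut_tower_mono[of 0 n] by simp

lemma aut_tower_subset_aut_blowup: "aut_tower R unif iota eps A n \<subseteq> aut_blowup R unif iota eps A"
  unfolding aut_blowup_def by blast

locale dvr_counit =
  fixes R :: "'k::field set" and unif :: 'k
    and iota :: "'k \<Rightarrow> 'a::comm_ring_1" and eps :: "'a \<Rightarrow> 'k"
  assumes dvr: "is_dvr_unif R unif"
    and iota_hom: "is_ring_hom iota"
    and eps_hom: "is_ring_hom eps"
    and eps_iota: "\<And>c. eps (iota c) = c"
begin

abbreviation tower :: "'a set \<Rightarrow> nat \<Rightarrow> 'a set" where
  "tower \<equiv> aut_tower R unif iota eps"

lemma subring_R: "is_subring R" and unif_in_R: "unif \<in> R" and unif_nonzero: "unif \<noteq> 0"
  using dvr by (auto simp: is_dvr_unif_def)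

lemma iota_inverse_cancel: "c \<noteq> 0 \<Longrightarrow> iota (inverse c) * (iota c * x) = x"
  and iota_cancel_inverse: "c \<noteq> 0 \<Longrightarrow> iota c * (iota (inverse c) * x) = x"
  by (simp_all add: mult.assoc[symmetric] is_ring_hom_mult[OF iota_hom, symmetric]
      is_ring_hom_one[OF iota_hom])

lemma iota_unif_power_cancel: "iota (unif ^ k) * (iota (inverse unif ^ k) * x) = x"
  using iota_cancel_inverse[of "unif ^ k" x] unif_nonzero by (simp add: power_inverse)

lemma counit_aut_tower_subset:
  assumes "eps ` A \<subseteq> R"
  shows "eps ` tower A n \<subseteq> R"
proof (induction n)
  case 0
  then show ?case using assms by simp
next
  case (Suc n)
  have "is_subring {x. eps x \<in> R}"
    using subring_R by (auto simp: is_subring_def is_ring_hom_one[OF eps_hom]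
        is_ring_hom_add[OF eps_hom] is_ring_hom_mult[OF eps_hom] is_ring_hom_uminus[OF eps_hom])
  moreover have "eps (iota (inverse unif) * x) \<in> R" if "r \<in> R" "eps x = unif * r" for x r
    using that unif_nonzero by (simp add: is_ring_hom_mult[OF eps_hom] eps_iota mult.assoc[symmetric])
  ultimately have "tower A (Suc n) \<subseteq> {x. eps x \<in> R}"
    using Suc by (simp, intro neron_blowup_e_least) auto
  then show ?case by blast
qed

lemma aut_tower_divide_unif_power:
  assumes "eps y \<in> R" and "iota (unif ^ k) * y \<in> tower A n"
  shows "y \<in> tower A (n + k)"
  using assms(2)
proof (induction k arbitrary: n)
  case 0
  then show ?case by (simp add: is_ring_hom_one[OF iota_hom])
next
  case (Suc k)
  let ?z = "iota (unif ^ k) * y"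
  have "iota unif * ?z \<in> tower A n"
    using Suc.prems by (simp add: is_ring_hom_mult[OF iota_hom] mult.assoc)
  moreover have "eps (iota unif * ?z) = unif * (unif ^ k * eps y)"
    by (simp add: is_ring_hom_mult[OF eps_hom] eps_iota)
  moreover have "unif ^ k * eps y \<in> R"
    using assms(1) subring_R unif_in_R by (simp add: is_subring_mult is_subring_power)
  ultimately have "iota (inverse unif) * (iota unif * ?z) \<in> tower A (Suc n)"
    by (simp add: neron_blowup_e_divide)
  then have "?z \<in> tower A (Suc n)"
    using unif_nonzero by (simp add: iota_inverse_cancel)
  then show ?case using Suc.IH by fastforce
qed

lemma aut_tower_divide_counit_zero:
  assumes "x \<in> tower A n" and "eps x = 0"
  shows "iota (inverse unif ^ k) * x \<in> tower A (n + k)"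
proof (rule aut_tower_divide_unif_power)
  show "eps (iota (inverse unif ^ k) * x) \<in> R"
    using assms(2) subring_R by (simp add: is_ring_hom_mult[OF eps_hom] is_subring_zero)
  show "iota (unif ^ k) * (iota (inverse unif ^ k) * x) \<in> tower A n"
    using assms(1) by (simp add: iota_unif_power_cancel)
qed

lemma trivial_modI:
  assumes "eps ` B \<subseteq> R"
    and "\<And>x. x \<in> B \<Longrightarrow> \<exists>r\<in>R. \<exists>b\<in>B. x - iota r = iota (unif ^ (m + 1)) * b"
  shows "trivial_mod R unif iota B m"
proof -
  have "\<exists>s\<in>R. r = unif ^ (m + 1) * s" if "b \<in> B" "iota r = iota (unif ^ (m + 1)) * b" for r b
    using arg_cong[OF that(2), of eps] that(1) assms(1)
    by (auto simp: is_ring_hom_mult[OF eps_hom] eps_iota)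
  then show ?thesis using assms(2) unfolding trivial_mod_def by blast
qed

lemma trivial_mod_aut_blowup:
  assumes "is_R_form R unif iota eps A"
  shows "trivial_mod R unif iota (aut_blowup R unif iota eps A) m"
proof (rule trivial_modI)
  have A: "is_subring A" "iota ` R \<subseteq> A" "eps ` A \<subseteq> R"
    using assms by (auto simp: is_R_form_def)
  show "eps ` aut_blowup R unif iota eps A \<subseteq> R"
    using counit_aut_tower_subset[OF A(3)] by (auto simp: aut_blowup_def)
  fix x assume "x \<in> aut_blowup R unif iota eps A"
  then obtain n where x: "x \<in> tower A n" by (auto simp: aut_blowup_def)
  have r: "eps x \<in> R" using counit_aut_tower_subset[OF A(3)] x by blast
  let ?z = "x - iota (eps x)"
  have "iota (eps x) \<in> tower A n"
    using A(2) r by (intro subsetD[OF subset_aut_tower]) blast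
  with is_subring_aut_tower[OF A(1)] x have z: "?z \<in> tower A n"
    by (rule is_subring_diff)
  have "eps ?z = 0" by (simp add: is_ring_hom_diff[OF eps_hom] eps_iota)
  from aut_tower_divide_counit_zero[OF z this]
  have b: "iota (inverse unif ^ (m + 1)) * ?z \<in> aut_blowup R unif iota eps A"
    by (rule subsetD[OF aut_tower_subset_aut_blowup])
  have "?z = iota (unif ^ (m + 1)) * (iota (inverse unif ^ (m + 1)) * ?z)"
    by (simp only: iota_unif_power_cancel)
  then show "\<exists>r\<in>R. \<exists>b\<in>aut_blowup R unif iota eps A. x - iota r = iota (unif ^ (m + 1)) * b"
    using r b by blast
qed

lemma trivial_mod_zero_imp_divide:
  assumes B: "is_R_form R unif iota eps B" and "trivial_mod R unif iota B 0"
    and x: "x \<in> B" and r: "r \<in> R" and e: "eps x = unif * r"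
  shows "iota (inverse unif) * x \<in> B"
proof -
  have Bs: "is_subring B" and Be: "eps ` B \<subseteq> R" and Bi: "iota ` R \<subseteq> B"
    using B by (auto simp: is_R_form_def)
  obtain s b where s: "s \<in> R" and b: "b \<in> B" and eq: "x - iota s = iota unif * b"
    using assms(2) x unfolding trivial_mod_def by fastforce
  have "eps x - s = unif * eps b"
    using arg_cong[OF eq, of eps]
    by (simp add: is_ring_hom_mult[OF eps_hom] is_ring_hom_diff[OF eps_hom] eps_iota)
  then have "s = unif * (r - eps b)" using e by (simp add: algebra_simps)
  then have "iota s = iota unif * iota (r - eps b)"
    by (simp add: is_ring_hom_mult[OF iota_hom])
  then have "x = iota unif * (iota (r - eps b) + b)"
    using eq by (simp add: algebra_simps)
  then have "iota (inverse unif) * x = iota (r - eps b) + b"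
    using unif_nonzero by (simp add: iota_inverse_cancel)
  moreover have "r - eps b \<in> R" using is_subring_diff[OF subring_R r] Be b by auto
  ultimately show ?thesis using is_subring_add[OF Bs _ b] Bi by auto
qed

lemma aut_blowup_subset_of_trivial_mod:
  assumes B: "is_R_form R unif iota eps B" and "A \<subseteq> B" and "trivial_mod R unif iota B 0"
  shows "aut_blowup R unif iota eps A \<subseteq> B"
proof -
  have Bs: "is_subring B" using B by (simp add: is_R_form_def)
  have "tower A n \<subseteq> B" for n
  proof (induction n)
    case 0
    then show ?case using assms(2) by simp
  next
    case (Suc n)
    then show ?case
      using trivial_mod_zero_imp_divide[OF assms(1,3)] by (simp, intro neron_blowup_e_least[OF Bs]) auto
  qed
  then show ?thesis by (auto simp: aut_blowup_def)
qed

lemma subset_aut_blowup_of_integral_counit: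
  assumes "is_R_form R unif iota eps A" and "eps ` B \<subseteq> R"
  shows "B \<subseteq> aut_blowup R unif iota eps A"
proof
  fix y assume y: "y \<in> B"
  obtain a n where a: "a \<in> A" and ya: "y = iota (inverse unif ^ n) * a"
    using assms(1) unfolding is_R_form_def by blast
  have "iota (unif ^ n) * y = a"
    by (simp only: ya iota_unif_power_cancel)
  then have "y \<in> tower A (0 + n)"
    using aut_tower_divide_unif_power[of y n A 0] assms(2) y a by auto
  then show "y \<in> aut_blowup R unif iota eps A"
    using aut_tower_subset_aut_blowup by blast
qed

end

theorem corollary2p23:
  fixes R :: "'k::field set" and unif :: 'k
    and iota :: "'k \<Rightarrow> 'a::comm_ring_1" and eps :: "'a \<Rightarrow> 'k"
    and A :: "'a set"
  assumes dvr: "is_dvr_unif R unif"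
    and iota_hom: "is_ring_hom iota"
    and eps_hom: "is_ring_hom eps"
    and eps_iota: "\<forall>c. eps (iota c) = c"
    and G: "is_R_form R unif iota eps A"
  shows "(\<forall>m. trivial_mod R unif iota (aut_blowup R unif iota eps A) m) \<and>
         (\<forall>B. is_R_form R unif iota eps B \<and> A \<subseteq> B \<and> (\<forall>m. trivial_mod R unif iota B m)
              \<longrightarrow> B = aut_blowup R unif iota eps A)"
proof -
  interpret dvr_counit R unif iota eps
    using dvr iota_hom eps_hom eps_iota by unfold_locales auto
  have "B = aut_blowup R unif iota eps A"
    if B: "is_R_form R unif iota eps B" and "A \<subseteq> B" and "\<forall>m. trivial_mod R unif iota B m" for B
  proof
    show "B \<subseteq> aut_blowup R unif iota eps A"
      using subset_aut_blowup_of_integral_counit[OF G] B by (simp add: is_R_form_def)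
    show "aut_blowup R unif iota eps A \<subseteq> B"
      using aut_blowup_subset_of_trivial_mod that by blast
  qed
  then show ?thesis using trivial_mod_aut_blowup[OF G] by blast
qed

end
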